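(* Let $(M^7,\varphi)$ be a manifold with a $\mathrm{G}_2$-structure and $\zeta=(1,0)$ the associated unit spinor. Then for every vector field $X$, $(X\lrcorner\varphi)\cdot\zeta=3X\cdot\zeta$; and for every $\gamma\in\Omega^3_{27}$, written as $\gamma_{ijk}=h_{ip}\varphi_{pjk}+h_{jp}\varphi_{ipk}+h_{kp}\varphi_{ijp}$ for a traceless symmetric 2-tensor $h$, one has $(X\lrcorner\gamma)\cdot\zeta=2h(X)\cdot\zeta$ and $(X\lrcorner\ast\gamma)\cdot\zeta=-2h(X)\cdot\zeta$.
   Context: The spinor bundle is identified with $\underline{\mathbb{R}}\oplus TM$, $\zeta=(1,0)$, with Clifford multiplication of a vector $Y$ on a spinor $(f,Z)$ given by $Y\cdot(f,Z)=(-\langle Y,Z\rangle,\,fY+Y\times Z)$, where $Y\times Z=(\varphi(Y,Z,\cdot))^\sharp$ (using the metric induced by $\varphi$). For a $k$-form $\epsilon$ and local orthonormal frame $e_i$, $\epsilon\cdot(f,Z)=\frac1{k!}\epsilon_{i_1\dots i_k}e_{i_1}\cdot(e_{i_2}\cdot(\cdots(e_{i_k}\cdot(f,Z))\cdots))$. $\Omega^3_{27}$ is the 27-dimensional irreducible $\mathrm{G}_2$-summand of 3-forms, whose elements are exactly those of the form above with $h$ traceless symmetric; indices are in an orthonormal frame, repeated indices summed; $\ast$ is the Hodge star of the induced metric and orientation. *)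

theory Defs
  imports "HOL-Analysis.Analysis" "HOL-Library.Numeral_Type"
begin

text \<open>Pointwise (tangent space) model of a G2-structure. The tangent space at a point
is identified with real^7 via an orthonormal frame e_i (standard basis); all tensors are
given by their components in this frame.\<close>

type_synonym vec7 = "real^7"
type_synonym form2 = "7 \<Rightarrow> 7 \<Rightarrow> real"
type_synonym form3 = "7 \<Rightarrow> 7 \<Rightarrow> 7 \<Rightarrow> real"
type_synonym form4 = "7 \<Rightarrow> 7 \<Rightarrow> 7 \<Rightarrow> 7 \<Rightarrow> real"
type_synonym spinor = "real \<times> (real^7)"

text \<open>Components of the elementary antisymmetrised 3-form e^{abc}.\<close>
definition alt3 :: "7 \<Rightarrow> 7 \<Rightarrow> 7 \<Rightarrow> 7 \<Rightarrow> 7 \<Rightarrow> 7 \<Rightarrow> real" where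
  "alt3 a b c i j k =
     (if (i,j,k) = (a,b,c) then 1 else 0) + (if (i,j,k) = (b,c,a) then 1 else 0)
   + (if (i,j,k) = (c,a,b) then 1 else 0) - (if (i,j,k) = (b,a,c) then 1 else 0)
   - (if (i,j,k) = (a,c,b) then 1 else 0) - (if (i,j,k) = (c,b,a) then 1 else 0)"

text \<open>The standard G2 3-form
  phi0 = e123 + e145 + e167 + e246 - e257 - e347 - e356
  (indices 1..7 represented by 0..6 in the type 7); its induced metric is the
  standard one and its induced orientation is e1 ^ ... ^ e7.\<close>
definition phi0 :: form3 where
  "phi0 i j k =
     alt3 0 1 2 i j k + alt3 0 3 4 i j k + alt3 0 5 6 i j k + alt3 1 3 5 i j k
   - alt3 1 4 6 i j k - alt3 2 3 6 i j k - alt3 2 4 5 i j k"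

text \<open>A G2-structure at a point, in components w.r.t. an arbitrary orthonormal frame
(for the metric induced by phi): phi is the pullback of phi0 under an orthogonal map R,
phi(x,y,z) = phi0(Rx,Ry,Rz). The orientation induced by phi is then (det R) times the
orientation of the frame.\<close>
definition pull3 :: "real^7^7 \<Rightarrow> form3 \<Rightarrow> form3" where
  "pull3 R w i j k = (\<Sum>a\<in>UNIV. \<Sum>b\<in>UNIV. \<Sum>c\<in>UNIV. R$a$i * R$b$j * R$c$k * w a b c)"

definition levi7 :: "(7 \<Rightarrow> 7) \<Rightarrow> real" where
  "levi7 I = det (\<chi> r. axis (I r) (1::real))"

definition idx7 :: "7 \<Rightarrow> 7 \<Rightarrow> 7 \<Rightarrow> 7 \<Rightarrow> 7 \<Rightarrow> 7 \<Rightarrow> 7 \<Rightarrow> 7 \<Rightarrow> 7" where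
  "idx7 i j k a b c d r =
     (if r = 0 then i else if r = 1 then j else if r = 2 then k else if r = 3 then a
      else if r = 4 then b else if r = 5 then c else d)"

text \<open>Hodge star of a 3-form, with orientation sign ori (ori = 1 when the frame is
positively oriented): ( *g)_{abcd} = 1/3! o eps_{ijkabcd} g_{ijk}.\<close>
definition hodge3 :: "real \<Rightarrow> form3 \<Rightarrow> form4" where
  "hodge3 ori g a b c d =
     (1/6) * (\<Sum>i\<in>UNIV. \<Sum>j\<in>UNIV. \<Sum>k\<in>UNIV. ori * levi7 (idx7 i j k a b c d) * g i j k)"

definition contr3 :: "vec7 \<Rightarrow> form3 \<Rightarrow> form2" where
  "contr3 X g j k = (\<Sum>i\<in>UNIV. X$i * g i j k)"

definition contr4 :: "vec7 \<Rightarrow> form4 \<Rightarrow> form3" where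
  "contr4 X g j k l = (\<Sum>i\<in>UNIV. X$i * g i j k l)"

definition cross7 :: "form3 \<Rightarrow> vec7 \<Rightarrow> vec7 \<Rightarrow> vec7" where
  "cross7 phi Y Z = (\<chi> k. \<Sum>i\<in>UNIV. \<Sum>j\<in>UNIV. phi i j k * Y$i * Z$j)"

text \<open>Clifford multiplication Y.(f,Z) = (-<Y,Z>, fY + Y x Z) on R + TM.\<close>
definition cliff :: "form3 \<Rightarrow> vec7 \<Rightarrow> spinor \<Rightarrow> spinor" where
  "cliff phi Y s = (- (Y \<bullet> snd s), fst s *\<^sub>R Y + cross7 phi Y (snd s))"

definition e7 :: "7 \<Rightarrow> vec7" where
  "e7 i = axis i 1"

definition act2 :: "form3 \<Rightarrow> form2 \<Rightarrow> spinor \<Rightarrow> spinor" where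
  "act2 phi w s = (1/2) *\<^sub>R (\<Sum>i\<in>UNIV. \<Sum>j\<in>UNIV.
      w i j *\<^sub>R cliff phi (e7 i) (cliff phi (e7 j) s))"

definition act3 :: "form3 \<Rightarrow> form3 \<Rightarrow> spinor \<Rightarrow> spinor" where
  "act3 phi w s = (1/6) *\<^sub>R (\<Sum>i\<in>UNIV. \<Sum>j\<in>UNIV. \<Sum>k\<in>UNIV.
      w i j k *\<^sub>R cliff phi (e7 i) (cliff phi (e7 j) (cliff phi (e7 k) s)))"

definition gamma_of :: "form3 \<Rightarrow> (7 \<Rightarrow> 7 \<Rightarrow> real) \<Rightarrow> form3" where
  "gamma_of phi h i j k = (\<Sum>p\<in>UNIV. h i p * phi p j k + h j p * phi i p k + h k p * phi i j p)"

definition apply_h :: "(7 \<Rightarrow> 7 \<Rightarrow> real) \<Rightarrow> vec7 \<Rightarrow> vec7" where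
  "apply_h h X = (\<chi> i. \<Sum>j\<in>UNIV. h i j * X$j)"

definition zeta :: spinor where "zeta = (1, 0)"

end

theory Submission
  imports Defs "HOL-Combinatorics.Transposition"
begin

text \<open>A \<open>G\<^sub>2\<close>-structure is, in a suitable orthonormal frame, the standard form \<open>phi0\<close>; here
  the frame change is the orthogonal matrix \<open>R\<close>. Clifford multiplication, the actions of 2- and
  3-forms on spinors, interior products, the construction \<open>h \<mapsto> \<gamma>\<close> and the Hodge star are all
  natural under orthogonal frame changes (the Hodge star up to the orientation sign \<open>det R\<close>,
  which is absorbed by its \<open>ori\<close> argument), and \<open>\<zeta> = (1, 0)\<close> is fixed. So all three identities
  reduce to the standard frame, where they are finite computations with the components of
  \<open>phi0\<close>, of \<open>\<gamma>\<close> and of \<open>*\<gamma>\<close>.\<close>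

section \<open>The index type \<open>7\<close>\<close>

lemma exhaust_7:
  fixes x :: 7
  shows "x = 0 \<or> x = 1 \<or> x = 2 \<or> x = 3 \<or> x = 4 \<or> x = 5 \<or> x = 6"
proof (induct x)
  case (of_int z)
  then have "z = 0 \<or> z = 1 \<or> z = 2 \<or> z = 3 \<or> z = 4 \<or> z = 5 \<or> z = 6"
    by fastforce
  then show ?case by auto
qed

lemma UNIV_7: "(UNIV :: 7 set) = {0, 1, 2, 3, 4, 5, 6}"
  using exhaust_7 by auto

lemma all_7: "(\<forall>i::7. P i) \<longleftrightarrow> P 0 \<and> P 1 \<and> P 2 \<and> P 3 \<and> P 4 \<and> P 5 \<and> P 6"
  by (metis exhaust_7)

lemma sum_7: "sum f (UNIV :: 7 set) = f 0 + f 1 + f 2 + f 3 + f 4 + f 5 + f 6"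
  unfolding UNIV_7 by (simp add: ac_simps)

lemma less_7:
  "(0::7) < 1" "(0::7) < 2" "(0::7) < 3" "(0::7) < 4" "(0::7) < 5" "(0::7) < 6"
  "(1::7) < 2" "(1::7) < 3" "(1::7) < 4" "(1::7) < 5" "(1::7) < 6"
  "(2::7) < 3" "(2::7) < 4" "(2::7) < 5" "(2::7) < 6"
  "(3::7) < 4" "(3::7) < 5" "(3::7) < 6"
  "(4::7) < 5" "(4::7) < 6"
  "(5::7) < 6"
  by (simp_all add: less_bit1_def bit1.Rep_0 bit1.Rep_1 bit1.Rep_numeral)

text \<open>The component computations below produce thousands of terms, too many for the full
  simplifier; they are run with \<open>simp only\<close> and these rule sets, which decide equality and order
  of numerals of type \<open>7\<close> by lookup.\<close>

lemmas neq_7 = less_7[THEN less_imp_neq] less_7[THEN less_imp_neq, THEN not_sym]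

lemmas arith_0_1 =
  mult_zero_left mult_zero_right mult_1_left mult_1_right mult_minus_left mult_minus_right
  add_0_left add_0_right diff_0 diff_0_right minus_zero minus_minus

lemmas phi0_eval = phi0_def alt3_def prod.inject neq_7 simp_thms if_True if_False arith_0_1


section \<open>Clifford multiplication on the unit spinor\<close>

lemma inner_e7: "e7 i \<bullet> V = V $ i"
  by (simp add: e7_def inner_axis')

lemma cross7_component: "cross7 phi Y Z $ m = (\<Sum>a\<in>UNIV. Y $ a * (\<Sum>n\<in>UNIV. phi a n m * Z $ n))"
  by (simp add: cross7_def sum_distrib_left mult_ac)

lemma cross7_zero_right [simp]: "cross7 phi Y 0 = 0"
  by (simp add: vec_eq_iff cross7_component)

lemma cross7_e7_left: "cross7 phi (e7 i) V = (\<chi> m. \<Sum>n\<in>UNIV. phi i n m * V $ n)"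
  by (simp add: vec_eq_iff cross7_component e7_def axis_def mult_if_delta)

lemma cliff_e7_zeta: "cliff phi (e7 k) zeta = (0, e7 k)"
  by (simp add: cliff_def zeta_def)

lemma cliff_e7_e7_zeta:
  "cliff phi (e7 j) (cliff phi (e7 k) zeta) = (- (if j = k then 1 else 0), \<chi> n. phi j k n)"
  unfolding cliff_e7_zeta
  by (simp add: cliff_def cross7_e7_left inner_e7 vec_eq_iff)
    (simp add: e7_def axis_def if_distrib cong: if_cong)

lemma cliff_e7_e7_e7_zeta:
  "cliff phi (e7 i) (cliff phi (e7 j) (cliff phi (e7 k) zeta)) =
    (- phi j k i, \<chi> m. (\<Sum>n\<in>UNIV. phi i n m * phi j k n) - (if j = k \<and> i = m then 1 else 0))"
  unfolding cliff_e7_e7_zeta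
  by (simp add: cliff_def cross7_e7_left inner_e7 vec_eq_iff) (simp add: e7_def axis_def)

lemma act2_zeta:
  "act2 phi w zeta =
    (- (1/2) * (\<Sum>i\<in>UNIV. w i i), \<chi> m. (1/2) * (\<Sum>i\<in>UNIV. \<Sum>j\<in>UNIV. w i j * phi i j m))"
  by (simp add: act2_def cliff_e7_e7_zeta prod_eq_iff fst_sum snd_sum)
    (simp add: vec_eq_iff sum_component sum_divide_distrib[symmetric] sum_negf if_distrib sum.delta
      cong: if_cong)

lemma act3_zeta:
  "act3 phi w zeta =
    (- (1/6) * (\<Sum>i\<in>UNIV. \<Sum>j\<in>UNIV. \<Sum>k\<in>UNIV. w i j k * phi j k i),
     \<chi> m. (1/6) * ((\<Sum>i\<in>UNIV. \<Sum>j\<in>UNIV. \<Sum>k\<in>UNIV. w i j k * (\<Sum>n\<in>UNIV. phi i n m * phi j k n))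
                   - (\<Sum>j\<in>UNIV. w m j j)))"
proof -
  have "(\<Sum>i\<in>UNIV. \<Sum>j\<in>UNIV. \<Sum>k\<in>UNIV. w i j k * (if j = k \<and> i = m then 1 else 0))
      = (\<Sum>j\<in>UNIV. w m j j)" for m
  proof -
    have "(\<Sum>j\<in>UNIV. \<Sum>k\<in>UNIV. w i j k * (if j = k \<and> i = m then 1 else 0))
        = (if i = m then \<Sum>j\<in>UNIV. w i j j else 0)" for i
      by (cases "i = m") (simp_all add: if_distrib cong: if_cong)
    then show ?thesis by (simp add: sum.delta)
  qed
  then show ?thesis
    by (simp add: act3_def cliff_e7_e7_e7_zeta prod_eq_iff fst_sum snd_sum vec_eq_iff sum_component
        sum_distrib_left sum_negf right_diff_distrib sum_subtractf)
qed

lemmas cliff_zeta_components =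
  cliff_def zeta_def prod_eq_iff vec_eq_iff all_7 fst_conv snd_conv inner_zero_right
  cross7_zero_right scaleR_Pair scaleR_one vector_scaleR_component vector_add_component
  vector_minus_component zero_index


section \<open>Alternating 3-forms and the standard form \<open>phi0\<close>\<close>

definition alternating3 :: "form3 \<Rightarrow> bool" where
  "alternating3 w \<longleftrightarrow> (\<forall>i j k. w j i k = - w i j k \<and> w i k j = - w i j k)"

lemma alternating3_swap:
  assumes "alternating3 w"
  shows "w j i k = - w i j k" "w i k j = - w i j k"
  using assms unfolding alternating3_def by blast+

lemma alternating3_repeated:
  assumes "alternating3 w"
  shows "w i i k = 0" "w i j j = 0" "w i j i = 0"
proof -
  have "w i i k = - w i i k" "w i j j = - w i j j" "w i j i = - w i i j" "w i i j = - w i i j"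
    using alternating3_swap(1)[OF assms, of i i k] alternating3_swap(2)[OF assms, of i j j]
      alternating3_swap(2)[OF assms, of i j i] alternating3_swap(1)[OF assms, of i i j]
    by simp_all
  then show "w i i k = 0" "w i j j = 0" "w i j i = 0" by simp_all
qed

lemma alternating3_sort:
  assumes "alternating3 w"
  shows "j < i \<Longrightarrow> w i j k = - w j i k" "k < j \<Longrightarrow> w i j k = - w i k j"
  using alternating3_swap(1)[OF assms, of i j k] alternating3_swap(2)[OF assms, of i k j]
  by simp_all

lemma alternating3_phi0: "alternating3 phi0"
  unfolding alternating3_def all_7 by (simp only: phi0_eval; simp)

lemma alternating3_gamma_of:
  assumes alt: "alternating3 phi"
  shows "alternating3 (gamma_of phi h)"
  unfolding alternating3_def
proof (intro allI conjI)
  fix i j k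
  have "phi p i k = - phi i p k" "phi j p k = - phi p j k" "phi j i p = - phi i j p" for p
    using alternating3_swap[OF alt, of p i k] alternating3_swap[OF alt, of p j k]
      alternating3_swap[OF alt, of i j p]
    by simp_all
  then show "gamma_of phi h j i k = - gamma_of phi h i j k"
    by (simp add: gamma_of_def sum_negf[symmetric] algebra_simps)
  have "phi p k j = - phi p j k" "phi i p j = - phi i j p" "phi i k p = - phi i p k" for p
    using alternating3_swap[OF alt, of p j k] alternating3_swap[OF alt, of i j p]
      alternating3_swap[OF alt, of i p k]
    by simp_all
  then show "gamma_of phi h i k j = - gamma_of phi h i j k"
    by (simp add: gamma_of_def sum_negf[symmetric] algebra_simps)
qed

lemma gamma_of_phi0_values:
  shows
    "gamma_of phi0 h 0 1 2 = h 0 0 + h 1 1 + h 2 2" "gamma_of phi0 h 0 1 3 = h 0 5 - h 1 4 + h 3 2"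
    "gamma_of phi0 h 0 1 4 = - h 0 6 + h 1 3 + h 4 2" "gamma_of phi0 h 0 1 5 = - h 0 3 - h 1 6 + h 5 2"
    "gamma_of phi0 h 0 1 6 = h 0 4 + h 1 5 + h 6 2" "gamma_of phi0 h 0 2 3 = - h 0 6 - h 2 4 - h 3 1"
    "gamma_of phi0 h 0 2 4 = - h 0 5 + h 2 3 - h 4 1" "gamma_of phi0 h 0 2 5 = h 0 4 - h 2 6 - h 5 1"
    "gamma_of phi0 h 0 2 6 = h 0 3 + h 2 5 - h 6 1" "gamma_of phi0 h 0 3 4 = h 0 0 + h 3 3 + h 4 4"
    "gamma_of phi0 h 0 3 5 = h 0 1 - h 3 6 + h 5 4" "gamma_of phi0 h 0 3 6 = - h 0 2 + h 3 5 + h 6 4"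
    "gamma_of phi0 h 0 4 5 = - h 0 2 - h 4 6 - h 5 3" "gamma_of phi0 h 0 4 6 = - h 0 1 + h 4 5 - h 6 3"
    "gamma_of phi0 h 0 5 6 = h 0 0 + h 5 5 + h 6 6" "gamma_of phi0 h 1 2 3 = - h 1 6 - h 2 5 + h 3 0"
    "gamma_of phi0 h 1 2 4 = - h 1 5 + h 2 6 + h 4 0" "gamma_of phi0 h 1 2 5 = h 1 4 + h 2 3 + h 5 0"
    "gamma_of phi0 h 1 2 6 = h 1 3 - h 2 4 + h 6 0" "gamma_of phi0 h 1 3 4 = h 1 0 + h 3 6 + h 4 5"
    "gamma_of phi0 h 1 3 5 = h 1 1 + h 3 3 + h 5 5" "gamma_of phi0 h 1 3 6 = - h 1 2 - h 3 4 + h 6 5"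
    "gamma_of phi0 h 1 4 5 = - h 1 2 + h 4 3 - h 5 6" "gamma_of phi0 h 1 4 6 = - h 1 1 - h 4 4 - h 6 6"
    "gamma_of phi0 h 1 5 6 = h 1 0 - h 5 4 - h 6 3" "gamma_of phi0 h 2 3 4 = h 2 0 + h 3 5 - h 4 6"
    "gamma_of phi0 h 2 3 5 = h 2 1 - h 3 4 - h 5 6" "gamma_of phi0 h 2 3 6 = - h 2 2 - h 3 3 - h 6 6"
    "gamma_of phi0 h 2 4 5 = - h 2 2 - h 4 4 - h 5 5" "gamma_of phi0 h 2 4 6 = - h 2 1 - h 4 3 - h 6 5"
    "gamma_of phi0 h 2 5 6 = h 2 0 - h 5 3 + h 6 4" "gamma_of phi0 h 3 4 5 = - h 3 2 - h 4 1 + h 5 0"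
    "gamma_of phi0 h 3 4 6 = - h 3 1 + h 4 2 + h 6 0" "gamma_of phi0 h 3 5 6 = h 3 0 + h 5 2 + h 6 1"
    "gamma_of phi0 h 4 5 6 = h 4 0 + h 5 1 - h 6 2"
  by (simp only: gamma_of_def sum_7 phi0_eval arith_0_1; simp)+


section \<open>The Levi-Civita symbol and the Hodge star in the standard frame\<close>

lemma levi7_compose_permutation:
  "p permutes UNIV \<Longrightarrow> levi7 (I \<circ> p) = of_int (sign p) * levi7 I"
  unfolding levi7_def using det_permute_rows[of p "\<chi> r. axis (I r) (1::real)"] by simp

lemma levi7_transposed:
  assumes "I = J \<circ> Transposition.transpose r s" and "r \<noteq> s"
  shows "levi7 I = - levi7 J"
  using assms by (simp add: levi7_compose_permutation permutes_swap_id sign_swap_id)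

lemma levi7_eq_0_if_not_inj: "\<not> inj I \<Longrightarrow> levi7 I = 0"
  unfolding levi7_def inj_def by (auto intro: det_identical_rows simp: row_def)

lemma levi7_id: "levi7 (idx7 0 1 2 3 4 5 6) = 1"
proof -
  have "(\<chi> r. axis (idx7 0 1 2 3 4 5 6 r) (1::real)) = mat 1"
    by (simp add: vec_eq_iff mat_def axis_def all_7 idx7_def)
  then show ?thesis by (simp add: levi7_def)
qed

lemma inj_idx7_iff: "inj (idx7 i j k a b c d) \<longleftrightarrow> distinct [i, j, k, a, b, c, d]"
proof -
  have "[i, j, k, a, b, c, d] = map (idx7 i j k a b c d) [0, 1, 2, 3, 4, 5, 6]"
    by (simp add: idx7_def)
  moreover have "distinct [0, 1, 2, 3, 4, 5, 6 :: 7]" "set [0, 1, 2, 3, 4, 5, 6 :: 7] = UNIV"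
    using UNIV_7 by auto
  ultimately show ?thesis by (simp only: distinct_map) simp
qed

lemma levi7_idx7_nondistinct:
  "\<not> distinct [i, j, k, a, b, c, d] \<Longrightarrow> levi7 (idx7 i j k a b c d) = 0"
  by (simp add: inj_idx7_iff levi7_eq_0_if_not_inj)

text \<open>One unconditional instance for each pair of positions, so that the simplifier discards
  repeated indices by matching alone.\<close>

lemmas levi7_idx7_repeated =
  levi7_idx7_nondistinct[of i i, simplified] levi7_idx7_nondistinct[of i j i, simplified]
  levi7_idx7_nondistinct[of i j k i, simplified] levi7_idx7_nondistinct[of i j k a i, simplified]
  levi7_idx7_nondistinct[of i j k a b i, simplified]
  levi7_idx7_nondistinct[of i j k a b c i, simplified]
  levi7_idx7_nondistinct[of i j j, simplified] levi7_idx7_nondistinct[of i j k j, simplified]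
  levi7_idx7_nondistinct[of i j k a j, simplified] levi7_idx7_nondistinct[of i j k a b j, simplified]
  levi7_idx7_nondistinct[of i j k a b c j, simplified]
  levi7_idx7_nondistinct[of i j k k, simplified] levi7_idx7_nondistinct[of i j k a k, simplified]
  levi7_idx7_nondistinct[of i j k a b k, simplified]
  levi7_idx7_nondistinct[of i j k a b c k, simplified]
  levi7_idx7_nondistinct[of i j k a a, simplified] levi7_idx7_nondistinct[of i j k a b a, simplified]
  levi7_idx7_nondistinct[of i j k a b c a, simplified]
  levi7_idx7_nondistinct[of i j k a b b, simplified]
  levi7_idx7_nondistinct[of i j k a b c b, simplified]
  levi7_idx7_nondistinct[of i j k a b c c, simplified]
  for i j k a b c d

lemma levi7_idx7_sort:
  "j < i \<Longrightarrow> levi7 (idx7 i j k a b c d) = - levi7 (idx7 j i k a b c d)"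
  "k < j \<Longrightarrow> levi7 (idx7 i j k a b c d) = - levi7 (idx7 i k j a b c d)"
  "a < k \<Longrightarrow> levi7 (idx7 i j k a b c d) = - levi7 (idx7 i j a k b c d)"
  "b < a \<Longrightarrow> levi7 (idx7 i j k a b c d) = - levi7 (idx7 i j k b a c d)"
  "c < b \<Longrightarrow> levi7 (idx7 i j k a b c d) = - levi7 (idx7 i j k a c b d)"
  "d < c \<Longrightarrow> levi7 (idx7 i j k a b c d) = - levi7 (idx7 i j k a b d c)"
  subgoal by (rule levi7_transposed[where r = 0 and s = 1])
      (simp_all add: fun_eq_iff all_7 idx7_def Transposition.transpose_def)
  subgoal by (rule levi7_transposed[where r = 1 and s = 2])
      (simp_all add: fun_eq_iff all_7 idx7_def Transposition.transpose_def)
  subgoal by (rule levi7_transposed[where r = 2 and s = 3])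
      (simp_all add: fun_eq_iff all_7 idx7_def Transposition.transpose_def)
  subgoal by (rule levi7_transposed[where r = 3 and s = 4])
      (simp_all add: fun_eq_iff all_7 idx7_def Transposition.transpose_def)
  subgoal by (rule levi7_transposed[where r = 4 and s = 5])
      (simp_all add: fun_eq_iff all_7 idx7_def Transposition.transpose_def)
  subgoal by (rule levi7_transposed[where r = 5 and s = 6])
      (simp_all add: fun_eq_iff all_7 idx7_def Transposition.transpose_def)
  done

lemma hodge3_sort:
  "b < a \<Longrightarrow> hodge3 ori g a b c d = - hodge3 ori g b a c d"
  "c < b \<Longrightarrow> hodge3 ori g a b c d = - hodge3 ori g a c b d"
  "d < c \<Longrightarrow> hodge3 ori g a b c d = - hodge3 ori g a b d c"
  by (simp_all add: hodge3_def levi7_idx7_sort sum_negf)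

lemma hodge3_nondistinct: "\<not> distinct [a, b, c, d] \<Longrightarrow> hodge3 ori g a b c d = 0"
  by (auto simp: hodge3_def levi7_idx7_nondistinct)

lemmas hodge3_repeated =
  hodge3_nondistinct[of a a, simplified] hodge3_nondistinct[of a b a, simplified]
  hodge3_nondistinct[of a b c a, simplified] hodge3_nondistinct[of a b b, simplified]
  hodge3_nondistinct[of a b c b, simplified] hodge3_nondistinct[of a b c c, simplified]
  for a b c

text \<open>For \<open>a < b < c < d\<close> with complement \<open>i < j < k\<close>, \<open>(*g)\<^sub>a\<^sub>b\<^sub>c\<^sub>d = ori \<cdot> \<epsilon>\<^sub>i\<^sub>j\<^sub>k\<^sub>a\<^sub>b\<^sub>c\<^sub>d \<cdot> g\<^sub>i\<^sub>j\<^sub>k\<close>.\<close>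

lemma hodge3_alternating_values:
  assumes alt: "alternating3 g"
  shows
    "hodge3 ori g 0 1 2 3 = ori * g 4 5 6" "hodge3 ori g 0 1 2 4 = - ori * g 3 5 6"
    "hodge3 ori g 0 1 2 5 = ori * g 3 4 6" "hodge3 ori g 0 1 2 6 = - ori * g 3 4 5"
    "hodge3 ori g 0 1 3 4 = ori * g 2 5 6" "hodge3 ori g 0 1 3 5 = - ori * g 2 4 6"
    "hodge3 ori g 0 1 3 6 = ori * g 2 4 5" "hodge3 ori g 0 1 4 5 = ori * g 2 3 6"
    "hodge3 ori g 0 1 4 6 = - ori * g 2 3 5" "hodge3 ori g 0 1 5 6 = ori * g 2 3 4"
    "hodge3 ori g 0 2 3 4 = - ori * g 1 5 6" "hodge3 ori g 0 2 3 5 = ori * g 1 4 6"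
    "hodge3 ori g 0 2 3 6 = - ori * g 1 4 5" "hodge3 ori g 0 2 4 5 = - ori * g 1 3 6"
    "hodge3 ori g 0 2 4 6 = ori * g 1 3 5" "hodge3 ori g 0 2 5 6 = - ori * g 1 3 4"
    "hodge3 ori g 0 3 4 5 = ori * g 1 2 6" "hodge3 ori g 0 3 4 6 = - ori * g 1 2 5"
    "hodge3 ori g 0 3 5 6 = ori * g 1 2 4" "hodge3 ori g 0 4 5 6 = - ori * g 1 2 3"
    "hodge3 ori g 1 2 3 4 = ori * g 0 5 6" "hodge3 ori g 1 2 3 5 = - ori * g 0 4 6"
    "hodge3 ori g 1 2 3 6 = ori * g 0 4 5" "hodge3 ori g 1 2 4 5 = ori * g 0 3 6"
    "hodge3 ori g 1 2 4 6 = - ori * g 0 3 5" "hodge3 ori g 1 2 5 6 = ori * g 0 3 4"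
    "hodge3 ori g 1 3 4 5 = - ori * g 0 2 6" "hodge3 ori g 1 3 4 6 = ori * g 0 2 5"
    "hodge3 ori g 1 3 5 6 = - ori * g 0 2 4" "hodge3 ori g 1 4 5 6 = ori * g 0 2 3"
    "hodge3 ori g 2 3 4 5 = ori * g 0 1 6" "hodge3 ori g 2 3 4 6 = - ori * g 0 1 5"
    "hodge3 ori g 2 3 5 6 = ori * g 0 1 4" "hodge3 ori g 2 4 5 6 = - ori * g 0 1 3"
    "hodge3 ori g 3 4 5 6 = ori * g 0 1 2"
  by (simp only: hodge3_def sum_7 levi7_idx7_repeated levi7_idx7_sort less_7 levi7_id
      alternating3_repeated[OF alt] alternating3_sort[OF alt] arith_0_1; simp)+


section \<open>The three identities in the standard frame\<close>

text \<open>The form acting on \<open>\<zeta>\<close> is kept abstract (\<open>w\<close>) while its contraction with \<open>phi0\<close> is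
  evaluated, and unfolded only in the reduced expression; unfolding it first makes the terms far
  larger.\<close>

lemma act2_contr3_phi0: "act2 phi0 (contr3 X phi0) zeta = 3 *\<^sub>R cliff phi0 X zeta"
proof -
  define w where "w = contr3 X phi0"
  show ?thesis
    unfolding act2_zeta w_def[symmetric]
    apply (simp only: cliff_zeta_components)
    apply (simp only: sum_7 phi0_eval)
    apply (simp only: w_def contr3_def sum_7 phi0_eval)
    by simp
qed

lemma act2_contr3_gamma_of_phi0:
  assumes sym: "\<And>i j. h i j = h j i" and traceless: "(\<Sum>i\<in>UNIV. h i i) = 0"
  shows "act2 phi0 (contr3 X (gamma_of phi0 h)) zeta = 2 *\<^sub>R cliff phi0 (apply_h h X) zeta"
proof -
  have h66: "h 6 6 = - (h 0 0 + h 1 1 + h 2 2 + h 3 3 + h 4 4 + h 5 5)"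
    using traceless by (simp add: sum_7)
  define g where "g = gamma_of phi0 h"
  define w where "w = contr3 X g"
  have g_alt: "alternating3 g"
    unfolding g_def by (rule alternating3_gamma_of[OF alternating3_phi0])
  show ?thesis
    unfolding act2_zeta g_def[symmetric] w_def[symmetric]
    apply (simp only: cliff_zeta_components)
    apply (simp only: sum_7 phi0_eval)
    apply (simp only: w_def contr3_def sum_7 alternating3_repeated[OF g_alt]
        alternating3_sort[OF g_alt] less_7 arith_0_1)
    apply (simp only: g_def gamma_of_phi0_values apply_h_def vec_lambda_beta sum_7)
    apply (intro conjI)
    by (simp_all add: sym h66 algebra_simps)
qed

lemma act3_contr4_hodge3_gamma_of_phi0:
  assumes sym: "\<And>i j. h i j = h j i" and traceless: "(\<Sum>i\<in>UNIV. h i i) = 0"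
  shows "act3 phi0 (contr4 X (hodge3 1 (gamma_of phi0 h))) zeta
    = - 2 *\<^sub>R cliff phi0 (apply_h h X) zeta"
proof -
  have h66: "h 6 6 = - (h 0 0 + h 1 1 + h 2 2 + h 3 3 + h 4 4 + h 5 5)"
    using traceless by (simp add: sum_7)
  define g where "g = gamma_of phi0 h"
  define w where "w = contr4 X (hodge3 1 g)"
  have g_alt: "alternating3 g"
    unfolding g_def by (rule alternating3_gamma_of[OF alternating3_phi0])
  show ?thesis
    unfolding act3_zeta g_def[symmetric] w_def[symmetric]
    apply (simp only: cliff_zeta_components)
    apply (simp only: sum_7 phi0_eval)
    apply (simp only: w_def contr4_def sum_7 hodge3_repeated arith_0_1)
    apply (simp only: hodge3_sort less_7 arith_0_1)
    apply (simp only: hodge3_alternating_values[OF g_alt] arith_0_1)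
    apply (simp only: g_def gamma_of_phi0_values apply_h_def vec_lambda_beta sum_7)
    apply (intro conjI)
    by (simp_all add: sym h66 algebra_simps)
qed


section \<open>Change of orthonormal frame\<close>

text \<open>\<open>pull2 R\<close>, \<open>pull3 R\<close> and \<open>pull4 R\<close> pull forms back along \<open>x \<mapsto> R x\<close>; for orthogonal \<open>R\<close>,
  pulling back along \<open>transpose R\<close> is the inverse operation.\<close>

definition pull2 :: "real^7^7 \<Rightarrow> form2 \<Rightarrow> form2" where
  "pull2 R w i j = (\<Sum>a\<in>UNIV. \<Sum>b\<in>UNIV. R$a$i * R$b$j * w a b)"

definition pull4 :: "real^7^7 \<Rightarrow> form4 \<Rightarrow> form4" where
  "pull4 R w i j k l =
    (\<Sum>a\<in>UNIV. \<Sum>b\<in>UNIV. \<Sum>c\<in>UNIV. \<Sum>d\<in>UNIV. R$a$i * R$b$j * R$c$k * R$d$l * w a b c d)"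

definition spinor_map :: "real^7^7 \<Rightarrow> spinor \<Rightarrow> spinor" where
  "spinor_map R s = (fst s, R *v snd s)"

lemma transpose_component: "transpose A $ i $ j = A $ j $ i"
  by (simp add: transpose_def)

lemma pull2_transpose:
  "pull2 (transpose R) w a b = (\<Sum>i\<in>UNIV. \<Sum>j\<in>UNIV. R$a$i * R$b$j * w i j)"
  by (simp add: pull2_def transpose_component)

lemma pull3_transpose:
  "pull3 (transpose R) w a b c =
    (\<Sum>i\<in>UNIV. \<Sum>j\<in>UNIV. \<Sum>k\<in>UNIV. R$a$i * R$b$j * R$c$k * w i j k)"
  by (simp add: pull3_def transpose_component)

lemma sum_kronecker:
  fixes a :: "'a::finite" and F :: "'a \<Rightarrow> real"
  shows "(\<Sum>b\<in>UNIV. (if a = b then 1 else 0) * F b) = F a"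
    and "(\<Sum>b\<in>UNIV. (if b = a then 1 else 0) * F b) = F a"
    and "(\<Sum>b\<in>UNIV. F b * (if a = b then 1 else 0)) = F a"
    and "(\<Sum>b\<in>UNIV. F b * (if b = a then 1 else 0)) = F a"
  by (simp_all add: mult_if_delta mult.commute[of "F _"])

lemma orthogonal_matrix_sum_cols:
  assumes "orthogonal_matrix R"
  shows "(\<Sum>a\<in>UNIV. R$a$i * R$a$j) = (if i = j then 1 else (0::real))"
proof -
  have "(transpose R ** R) $ i $ j = mat 1 $ i $ j"
    using assms by (simp add: orthogonal_matrix_def)
  then show ?thesis by (simp add: matrix_matrix_mult_def transpose_def mat_def)
qed

lemma orthogonal_matrix_sum_rows:
  assumes "orthogonal_matrix R"
  shows "(\<Sum>i\<in>UNIV. R$a$i * R$b$i) = (if a = b then 1 else (0::real))"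
proof -
  have "(R ** transpose R) $ a $ b = mat 1 $ a $ b"
    using assms by (simp add: orthogonal_matrix_def)
  then show ?thesis by (simp add: matrix_matrix_mult_def transpose_def mat_def)
qed

lemma orthogonal_contract_cols:
  fixes R :: "real^7^7"
  assumes "orthogonal_matrix R"
  shows "(\<Sum>j\<in>UNIV. \<Sum>a\<in>UNIV. R$a$i * R$a$j * F j) = F i"
  by (simp add: sum_distrib_right[symmetric] orthogonal_matrix_sum_cols[OF assms] sum_kronecker)

lemma orthogonal_contract_rows:
  fixes R :: "real^7^7"
  assumes "orthogonal_matrix R"
  shows "(\<Sum>c\<in>UNIV. \<Sum>j\<in>UNIV. R$b$j * R$c$j * F c) = F b"
  by (simp add: sum_distrib_right[symmetric] orthogonal_matrix_sum_rows[OF assms] sum_kronecker)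

lemma orthogonal_matrix_inner:
  assumes "orthogonal_matrix (R :: real^7^7)"
  shows "(R *v x) \<bullet> (R *v y) = x \<bullet> y"
  using assms orthogonal_transformation_matrix[of "\<lambda>x. R *v x"]
  by (simp add: orthogonal_transformation_def)

lemma orthogonal_matrix_vector_inverse:
  assumes "orthogonal_matrix (R :: real^7^7)"
  shows "(R *v x) v* R = x" "R *v (x v* R) = x"
proof -
  have "transpose R *v (R *v x) = x" "R *v (transpose R *v x) = x"
    using assms by (simp_all only: matrix_vector_mul_assoc orthogonal_matrix_def) simp_all
  then show "(R *v x) v* R = x" "R *v (x v* R) = x" by simp_all
qed

lemma sum_rotate3:
  "(\<Sum>a\<in>A. \<Sum>b\<in>B. \<Sum>x\<in>X. f a b x) = (\<Sum>x\<in>X. \<Sum>a\<in>A. \<Sum>b\<in>B. f a b x)"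
  by (simp only: sum.swap[of _ B X] sum.swap[of _ A X])

lemma sum_rotate4:
  "(\<Sum>a\<in>A. \<Sum>b\<in>B. \<Sum>c\<in>C. \<Sum>x\<in>X. f a b c x) = (\<Sum>x\<in>X. \<Sum>a\<in>A. \<Sum>b\<in>B. \<Sum>c\<in>C. f a b c x)"
  by (rule trans[OF sum.cong[OF refl]], rule sum_rotate3, rule sum.swap)

lemma sum_rotate5:
  "(\<Sum>a\<in>A. \<Sum>b\<in>B. \<Sum>c\<in>C. \<Sum>d\<in>D. \<Sum>x\<in>X. f a b c d x)
    = (\<Sum>x\<in>X. \<Sum>a\<in>A. \<Sum>b\<in>B. \<Sum>c\<in>C. \<Sum>d\<in>D. f a b c d x)"
  by (rule trans[OF sum.cong[OF refl]], rule sum_rotate4, rule sum.swap)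

lemma sum_rotate6:
  "(\<Sum>a\<in>A. \<Sum>b\<in>B. \<Sum>c\<in>C. \<Sum>d\<in>D. \<Sum>e\<in>E. \<Sum>x\<in>X. f a b c d e x)
    = (\<Sum>x\<in>X. \<Sum>a\<in>A. \<Sum>b\<in>B. \<Sum>c\<in>C. \<Sum>d\<in>D. \<Sum>e\<in>E. f a b c d e x)"
  by (rule trans[OF sum.cong[OF refl]], rule sum_rotate5, rule sum.swap)

lemma sum_rotate7:
  "(\<Sum>a\<in>A. \<Sum>b\<in>B. \<Sum>c\<in>C. \<Sum>d\<in>D. \<Sum>e\<in>E. \<Sum>g\<in>G. \<Sum>x\<in>X. f a b c d e g x)
    = (\<Sum>x\<in>X. \<Sum>a\<in>A. \<Sum>b\<in>B. \<Sum>c\<in>C. \<Sum>d\<in>D. \<Sum>e\<in>E. \<Sum>g\<in>G. f a b c d e g x)"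
  by (rule trans[OF sum.cong[OF refl]], rule sum_rotate6, rule sum.swap)

lemma sum_rotate8:
  "(\<Sum>a\<in>A. \<Sum>b\<in>B. \<Sum>c\<in>C. \<Sum>d\<in>D. \<Sum>e\<in>E. \<Sum>g\<in>G. \<Sum>k\<in>K. \<Sum>x\<in>X. f a b c d e g k x)
    = (\<Sum>x\<in>X. \<Sum>a\<in>A. \<Sum>b\<in>B. \<Sum>c\<in>C. \<Sum>d\<in>D. \<Sum>e\<in>E. \<Sum>g\<in>G. \<Sum>k\<in>K. f a b c d e g k x)"
  by (rule trans[OF sum.cong[OF refl]], rule sum_rotate7, rule sum.swap)

lemma cross7_pull3: "cross7 (pull3 R g) Y Z = transpose R *v cross7 g (R *v Y) (R *v Z)"
proof -
  have "cross7 (pull3 R g) Y Z $ k = (transpose R *v cross7 g (R *v Y) (R *v Z)) $ k" for k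
    apply (simp add: cross7_def pull3_def matrix_vector_mult_def transpose_def sum_distrib_left
        sum_distrib_right mult_ac)
    apply (rule trans[OF sum.swap], rule trans[OF sum.swap], rule trans[OF sum_rotate4],
        rule trans[OF sum_rotate4], rule trans[OF sum_rotate5])
    by (simp add: mult_ac)
  then show ?thesis by (simp add: vec_eq_iff)
qed

lemma spinor_map_transpose_inverse:
  assumes "orthogonal_matrix R"
  shows "spinor_map R (spinor_map (transpose R) s) = s"
  using orthogonal_matrix_vector_inverse(2)[OF assms] by (simp add: spinor_map_def)

lemma spinor_map_zeta: "spinor_map R zeta = zeta"
  by (simp add: spinor_map_def zeta_def)

lemma cliff_pull3:
  assumes "orthogonal_matrix R"
  shows "cliff (pull3 R g) Y s = spinor_map (transpose R) (cliff g (R *v Y) (spinor_map R s))"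
  by (simp add: cliff_def spinor_map_def orthogonal_matrix_inner[OF assms] cross7_pull3
      matrix_vector_right_distrib matrix_vector_mult_scaleR
      orthogonal_matrix_vector_inverse(1)[OF assms])

lemma linear_cross7_left: "linear (\<lambda>Y. cross7 g Y Z)"
  by (rule linearI) (simp_all add: cross7_def vec_eq_iff algebra_simps sum.distrib sum_distrib_left)

lemma linear_cross7_right: "linear (cross7 g Y)"
  by (rule linearI) (simp_all add: cross7_def vec_eq_iff algebra_simps sum.distrib sum_distrib_left)

lemma linear_cliff_vector: "linear (\<lambda>Y. cliff g Y s)"
  using linear_add[OF linear_cross7_left[of g "snd s"]]
    linear_scale[OF linear_cross7_left[of g "snd s"]]
  by (intro linearI) (simp_all add: cliff_def prod_eq_iff inner_add_left algebra_simps)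

lemma linear_cliff_spinor: "linear (cliff g Y)"
  using linear_add[OF linear_cross7_right[of g Y]] linear_scale[OF linear_cross7_right[of g Y]]
  by (intro linearI) (simp_all add: cliff_def prod_eq_iff inner_add_right algebra_simps)

lemma linear_spinor_map: "linear (spinor_map R)"
  by (rule linearI)
    (simp_all add: spinor_map_def prod_eq_iff matrix_vector_right_distrib matrix_vector_mult_scaleR)

lemma cliff_matrix_vector_mult_e7:
  "cliff g (R *v e7 i) t = (\<Sum>a\<in>UNIV. R$a$i *\<^sub>R cliff g (e7 a) t)"
proof -
  have "R *v e7 i = (\<Sum>a\<in>UNIV. R$a$i *\<^sub>R e7 a)"
    by (simp add: vec_eq_iff matrix_vector_mult_def e7_def sum_component axis_def sum_kronecker)
  then show ?thesis
    by (simp add: linear_sum[OF linear_cliff_vector] linear_scale[OF linear_cliff_vector])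
qed

lemma sum_scaleR_pull2_transpose:
  "(\<Sum>i\<in>UNIV. \<Sum>j\<in>UNIV. w i j *\<^sub>R (\<Sum>a\<in>UNIV. \<Sum>b\<in>UNIV. (R$a$i * R$b$j) *\<^sub>R F a b))
    = (\<Sum>a\<in>UNIV. \<Sum>b\<in>UNIV. pull2 (transpose R) w a b *\<^sub>R (F a b :: 'v::real_vector))"
  apply (simp add: pull2_transpose scaleR_sum_right scaleR_sum_left)
  apply (rule trans[OF sum_rotate4], rule trans[OF sum_rotate4])
  by (simp add: mult_ac)

lemma sum_scaleR_pull3_transpose:
  "(\<Sum>i\<in>UNIV. \<Sum>j\<in>UNIV. \<Sum>k\<in>UNIV. w i j k *\<^sub>R
      (\<Sum>a\<in>UNIV. \<Sum>b\<in>UNIV. \<Sum>c\<in>UNIV. (R$a$i * R$b$j * R$c$k) *\<^sub>R F a b c))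
    = (\<Sum>a\<in>UNIV. \<Sum>b\<in>UNIV. \<Sum>c\<in>UNIV.
        pull3 (transpose R) w a b c *\<^sub>R (F a b c :: 'v::real_vector))"
  apply (simp add: pull3_transpose scaleR_sum_right scaleR_sum_left)
  apply (rule trans[OF sum_rotate6], rule trans[OF sum_rotate6], rule trans[OF sum_rotate6])
  by (simp add: mult_ac)

lemma act2_pull3:
  assumes O: "orthogonal_matrix R"
  shows "act2 (pull3 R g) w s =
    spinor_map (transpose R) (act2 g (pull2 (transpose R) w) (spinor_map R s))"
proof -
  define s' where "s' = spinor_map R s"
  define F where "F a b = cliff g (e7 a) (cliff g (e7 b) s')" for a b
  have "cliff (pull3 R g) (e7 i) (cliff (pull3 R g) (e7 j) s) =
      spinor_map (transpose R) (\<Sum>a\<in>UNIV. \<Sum>b\<in>UNIV. (R$a$i * R$b$j) *\<^sub>R F a b)" for i j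
    apply (simp add: cliff_pull3[OF O] spinor_map_transpose_inverse[OF O] s'_def[symmetric] F_def
        cliff_matrix_vector_mult_e7 linear_sum[OF linear_cliff_spinor]
        linear_scale[OF linear_cliff_spinor] scaleR_sum_right)
    apply (rule arg_cong[where f = "spinor_map (transpose R)"])
    apply (rule trans[OF sum.swap])
    by (simp add: mult_ac)
  then have "act2 (pull3 R g) w s = spinor_map (transpose R) ((1/2) *\<^sub>R
      (\<Sum>i\<in>UNIV. \<Sum>j\<in>UNIV. w i j *\<^sub>R (\<Sum>a\<in>UNIV. \<Sum>b\<in>UNIV. (R$a$i * R$b$j) *\<^sub>R F a b)))"
    by (simp add: act2_def linear_sum[OF linear_spinor_map] linear_scale[OF linear_spinor_map])
  also have "\<dots> = spinor_map (transpose R) (act2 g (pull2 (transpose R) w) s')"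
    by (simp only: sum_scaleR_pull2_transpose act2_def F_def)
  finally show ?thesis by (simp add: s'_def)
qed

lemma act3_pull3:
  assumes O: "orthogonal_matrix R"
  shows "act3 (pull3 R g) w s =
    spinor_map (transpose R) (act3 g (pull3 (transpose R) w) (spinor_map R s))"
proof -
  define s' where "s' = spinor_map R s"
  define F where "F a b c = cliff g (e7 a) (cliff g (e7 b) (cliff g (e7 c) s'))" for a b c
  have "cliff (pull3 R g) (e7 i) (cliff (pull3 R g) (e7 j) (cliff (pull3 R g) (e7 k) s)) =
      spinor_map (transpose R)
        (\<Sum>a\<in>UNIV. \<Sum>b\<in>UNIV. \<Sum>c\<in>UNIV. (R$a$i * R$b$j * R$c$k) *\<^sub>R F a b c)" for i j k
    apply (simp add: cliff_pull3[OF O] spinor_map_transpose_inverse[OF O] s'_def[symmetric] F_def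
        cliff_matrix_vector_mult_e7 linear_sum[OF linear_cliff_spinor]
        linear_scale[OF linear_cliff_spinor] scaleR_sum_right)
    apply (rule arg_cong[where f = "spinor_map (transpose R)"])
    apply (rule trans[OF sum.swap], rule trans[OF sum_rotate3])
    by (simp add: mult_ac)
  then have "act3 (pull3 R g) w s = spinor_map (transpose R) ((1/6) *\<^sub>R
      (\<Sum>i\<in>UNIV. \<Sum>j\<in>UNIV. \<Sum>k\<in>UNIV. w i j k *\<^sub>R
        (\<Sum>a\<in>UNIV. \<Sum>b\<in>UNIV. \<Sum>c\<in>UNIV. (R$a$i * R$b$j * R$c$k) *\<^sub>R F a b c)))"
    by (simp add: act3_def linear_sum[OF linear_spinor_map] linear_scale[OF linear_spinor_map])
  also have "\<dots> = spinor_map (transpose R) (act3 g (pull3 (transpose R) w) s')"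
    by (simp only: sum_scaleR_pull3_transpose act3_def F_def)
  finally show ?thesis by (simp add: s'_def)
qed

lemma contr3_pull3:
  assumes O: "orthogonal_matrix R"
  shows "pull2 (transpose R) (contr3 X (pull3 R g)) = contr3 (R *v X) g"
proof (intro ext)
  fix a b
  have "pull2 (transpose R) (contr3 X (pull3 R g)) a b =
    (\<Sum>a'\<in>UNIV. \<Sum>x\<in>UNIV. R$a'$x * X$x * (\<Sum>b'\<in>UNIV. \<Sum>i\<in>UNIV. R$a$i * R$b'$i *
      (\<Sum>c'\<in>UNIV. \<Sum>j\<in>UNIV. R$b$j * R$c'$j * g a' b' c')))"
    apply (simp add: pull2_transpose contr3_def pull3_def sum_distrib_left sum_distrib_right
        mult_ac)
    apply (rule trans[OF sum.swap], rule trans[OF sum_rotate6], rule trans[OF sum_rotate3],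
        rule trans[OF sum_rotate6], rule trans[OF sum_rotate5], rule trans[OF sum_rotate6])
    by (rule refl)
  also have "\<dots> = (\<Sum>a'\<in>UNIV. \<Sum>x\<in>UNIV. R$a'$x * X$x * g a' a b)"
    by (simp add: orthogonal_contract_rows[OF O])
  also have "\<dots> = contr3 (R *v X) g a b"
    by (simp add: contr3_def matrix_vector_mult_def sum_distrib_right)
  finally show "pull2 (transpose R) (contr3 X (pull3 R g)) a b = contr3 (R *v X) g a b" .
qed

lemma contr4_pull4:
  assumes O: "orthogonal_matrix R"
  shows "pull3 (transpose R) (contr4 X (pull4 R g)) = contr4 (R *v X) g"
proof (intro ext)
  fix a b c
  have "pull3 (transpose R) (contr4 X (pull4 R g)) a b c =
    (\<Sum>a'\<in>UNIV. \<Sum>x\<in>UNIV. R$a'$x * X$x * (\<Sum>b'\<in>UNIV. \<Sum>i\<in>UNIV. R$a$i * R$b'$i *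
      (\<Sum>c'\<in>UNIV. \<Sum>j\<in>UNIV. R$b$j * R$c'$j *
        (\<Sum>d'\<in>UNIV. \<Sum>k\<in>UNIV. R$c$k * R$d'$k * g a' b' c' d'))))"
    apply (simp add: pull3_transpose contr4_def pull4_def sum_distrib_left sum_distrib_right
        mult_ac)
    apply (rule trans[OF sum_rotate3], rule trans[OF sum_rotate8], rule trans[OF sum_rotate4],
        rule trans[OF sum_rotate8], rule trans[OF sum_rotate5], rule trans[OF sum_rotate8],
        rule trans[OF sum_rotate7], rule trans[OF sum_rotate8])
    by (simp add: mult_ac)
  also have "\<dots> = (\<Sum>a'\<in>UNIV. \<Sum>x\<in>UNIV. R$a'$x * X$x * g a' a b c)"
    by (simp add: orthogonal_contract_rows[OF O])
  also have "\<dots> = contr4 (R *v X) g a b c"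
    by (simp add: contr4_def matrix_vector_mult_def sum_distrib_right)
  finally show "pull3 (transpose R) (contr4 X (pull4 R g)) a b c = contr4 (R *v X) g a b c" .
qed

lemma gamma_of_pull3:
  assumes O: "orthogonal_matrix R"
  shows "gamma_of (pull3 R g) h = pull3 R (gamma_of g (pull2 (transpose R) h))"
proof (intro ext)
  fix i j k
  let ?h = "pull2 (transpose R) h"
  have h: "h u p = (\<Sum>x\<in>UNIV. \<Sum>a\<in>UNIV. R$a$u * R$a$x * h x p)" for u p
    using orthogonal_contract_cols[OF O, where F = "\<lambda>x. h x p" and i = u] by simp
  have "(\<Sum>p\<in>UNIV. h i p * pull3 R g p j k) =
      (\<Sum>a\<in>UNIV. \<Sum>b\<in>UNIV. \<Sum>c\<in>UNIV. R$a$i * R$b$j * R$c$k * (\<Sum>q\<in>UNIV. ?h a q * g q b c))"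
    apply (simp only: h[of i])
    apply (simp add: pull3_def pull2_transpose sum_distrib_left sum_distrib_right mult_ac)
    apply (rule trans[OF sum_rotate5], rule trans[OF sum_rotate3], rule trans[OF sum_rotate5],
        rule trans[OF sum_rotate5], rule trans[OF sum_rotate6])
    by (simp add: mult_ac)
  moreover have "(\<Sum>p\<in>UNIV. h j p * pull3 R g i p k) =
      (\<Sum>a\<in>UNIV. \<Sum>b\<in>UNIV. \<Sum>c\<in>UNIV. R$a$i * R$b$j * R$c$k * (\<Sum>q\<in>UNIV. ?h b q * g a q c))"
    apply (simp only: h[of j])
    apply (simp add: pull3_def pull2_transpose sum_distrib_left sum_distrib_right mult_ac)
    apply (rule trans[OF sum_rotate5], rule trans[OF sum_rotate4], rule trans[OF sum_rotate5],
        rule trans[OF sum_rotate6], rule trans[OF sum_rotate6])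
    by (simp add: mult_ac)
  moreover have "(\<Sum>p\<in>UNIV. h k p * pull3 R g i j p) =
      (\<Sum>a\<in>UNIV. \<Sum>b\<in>UNIV. \<Sum>c\<in>UNIV. R$a$i * R$b$j * R$c$k * (\<Sum>q\<in>UNIV. ?h c q * g a b q))"
    apply (simp only: h[of k])
    apply (simp add: pull3_def pull2_transpose sum_distrib_left sum_distrib_right mult_ac)
    apply (rule trans[OF sum_rotate5], rule trans[OF sum_rotate5], rule trans[OF sum_rotate6],
        rule trans[OF sum_rotate6], rule trans[OF sum_rotate6])
    by (simp add: mult_ac)
  ultimately show "gamma_of (pull3 R g) h i j k = pull3 R (gamma_of g ?h) i j k"
    unfolding gamma_of_def sum.distrib
    by (simp only:) (simp add: pull3_def gamma_of_def sum.distrib distrib_left)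
qed

lemma apply_h_pull2:
  assumes O: "orthogonal_matrix R"
  shows "R *v apply_h h X = apply_h (pull2 (transpose R) h) (R *v X)"
proof -
  have "apply_h (pull2 (transpose R) h) (R *v X) $ a =
      (\<Sum>i\<in>UNIV. \<Sum>j\<in>UNIV. R$a$i * h i j * (\<Sum>x\<in>UNIV. \<Sum>b\<in>UNIV. R$b$j * R$b$x * X$x))" for a
    apply (simp add: matrix_vector_mult_def apply_h_def pull2_transpose sum_distrib_left
        sum_distrib_right mult_ac)
    apply (rule trans[OF sum_rotate4], rule trans[OF sum_rotate4], rule trans[OF sum_rotate4])
    by (simp add: mult_ac)
  also have "\<dots> a = (R *v apply_h h X) $ a" for a
    by (simp only: orthogonal_contract_cols[OF O])
      (simp add: matrix_vector_mult_def apply_h_def sum_distrib_left mult_ac)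
  finally show ?thesis by (simp add: vec_eq_iff)
qed

lemma pull2_symmetric:
  assumes "\<And>i j. h i j = h j i"
  shows "pull2 S h a b = pull2 S h b a"
proof -
  have "pull2 S h a b = (\<Sum>j\<in>UNIV. \<Sum>i\<in>UNIV. S$i$a * S$j$b * h i j)"
    unfolding pull2_def by (rule sum.swap)
  also have "\<dots> = pull2 S h b a"
    unfolding pull2_def by (simp add: assms mult_ac)
  finally show ?thesis .
qed

lemma pull2_transpose_trace:
  assumes O: "orthogonal_matrix R"
  shows "(\<Sum>a\<in>UNIV. pull2 (transpose R) h a a) = (\<Sum>i\<in>UNIV. h i i)"
proof -
  have "(\<Sum>a\<in>UNIV. pull2 (transpose R) h a a) =
      (\<Sum>i\<in>UNIV. \<Sum>j\<in>UNIV. \<Sum>a\<in>UNIV. R$a$i * R$a$j * h i j)"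
    apply (simp add: pull2_transpose)
    apply (rule trans[OF sum_rotate3], rule trans[OF sum_rotate3])
    by (simp add: mult_ac)
  also have "\<dots> = (\<Sum>i\<in>UNIV. h i i)"
    by (simp add: orthogonal_contract_cols[OF O])
  finally show ?thesis .
qed

lemma det_expand_row:
  "det (\<chi> s. (f(r := v)) s) = (\<Sum>x\<in>UNIV. v $ x * det (\<chi> s. (f(r := e7 x)) s))"
proof -
  have "det (\<chi> s. (f(r := v)) s) = det (\<chi> s. if s = r then (\<Sum>x\<in>UNIV. v $ x *s e7 x) else f s)"
    by (simp only: e7_def basis_expansion fun_upd_def)
  also have "\<dots> = (\<Sum>x\<in>UNIV. det (\<chi> s. if s = r then v $ x *s e7 x else f s))"
    by (rule det_linear_row_sum[of UNIV r "\<lambda>i x. v $ x *s e7 x" f, simplified])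
  also have "\<dots> = (\<Sum>x\<in>UNIV. v $ x * det (\<chi> s. (f(r := e7 x)) s))"
    by (simp add: det_row_mul fun_upd_def)
  finally show ?thesis .
qed

lemma sum_levi7_front:
  fixes R :: "real^7^7"
  shows "(\<Sum>i\<in>UNIV. \<Sum>j\<in>UNIV. \<Sum>k\<in>UNIV. R$p$i * R$q$j * R$r$k * levi7 (idx7 i j k a b c d))
    = det (\<chi> s. ((\<lambda>s. e7 (idx7 0 0 0 a b c d s))(2 := R$r, 1 := R$q, 0 := R$p)) s)"
proof -
  define B where "B = (\<lambda>s. e7 (idx7 0 0 0 a b c d s))"
  define D where "D u v w = det (\<chi> s. (B(2 := w, 1 := v, 0 := u)) s)" for u v w
  have levi: "levi7 (idx7 i j k a b c d) = D (e7 i) (e7 j) (e7 k)" for i j k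
    unfolding levi7_def D_def B_def
    by (rule arg_cong[where f = det]) (simp add: vec_eq_iff all_7 idx7_def e7_def)
  have expand_0: "D u v w = (\<Sum>x\<in>UNIV. u $ x * D (e7 x) v w)" for u v w
    unfolding D_def by (rule det_expand_row)
  have expand_1: "D u v w = (\<Sum>x\<in>UNIV. v $ x * D u (e7 x) w)" for u v w
  proof -
    have "B(2 := w, 1 := v', 0 := u) = B(2 := w, 0 := u, 1 := v')" for v'
      by (auto simp: fun_eq_iff)
    then show ?thesis unfolding D_def by (simp only:) (rule det_expand_row)
  qed
  have expand_2: "D u v w = (\<Sum>x\<in>UNIV. w $ x * D u v (e7 x))" for u v w
  proof -
    have "B(2 := w', 1 := v, 0 := u) = B(1 := v, 0 := u, 2 := w')" for w'
      by (auto simp: fun_eq_iff)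
    then show ?thesis unfolding D_def by (simp only:) (rule det_expand_row)
  qed
  have "D (R$p) (R$q) (R$r) =
      (\<Sum>i\<in>UNIV. \<Sum>j\<in>UNIV. \<Sum>k\<in>UNIV. R$p$i * R$q$j * R$r$k * D (e7 i) (e7 j) (e7 k))"
    by (simp add: expand_0[of "R$p"] expand_1[of "e7 _" "R$q"] expand_2[of "e7 _" "e7 _" "R$r"]
        sum_distrib_left mult.assoc)
  then show ?thesis by (simp add: levi D_def B_def)
qed

lemma sum_levi7_back:
  fixes R :: "real^7^7"
  shows "(\<Sum>a'\<in>UNIV. \<Sum>b'\<in>UNIV. \<Sum>c'\<in>UNIV. \<Sum>d'\<in>UNIV.
      R$a'$a * R$b'$b * R$c'$c * R$d'$d * levi7 (idx7 p q r a' b' c' d'))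
    = det (\<chi> s. ((\<lambda>s. e7 (idx7 p q r 0 0 0 0 s))
        (6 := transpose R $ d, 5 := transpose R $ c, 4 := transpose R $ b, 3 := transpose R $ a)) s)"
proof -
  define B where "B = (\<lambda>s. e7 (idx7 p q r 0 0 0 0 s))"
  define D where "D u v w y = det (\<chi> s. (B(6 := y, 5 := w, 4 := v, 3 := u)) s)"
    for u v w y
  have levi: "levi7 (idx7 p q r a' b' c' d') = D (e7 a') (e7 b') (e7 c') (e7 d')" for a' b' c' d'
    unfolding levi7_def D_def B_def
    by (rule arg_cong[where f = det]) (simp add: vec_eq_iff all_7 idx7_def e7_def)
  have expand_3: "D u v w y = (\<Sum>x\<in>UNIV. u $ x * D (e7 x) v w y)" for u v w y
    unfolding D_def by (rule det_expand_row)
  have expand_4: "D u v w y = (\<Sum>x\<in>UNIV. v $ x * D u (e7 x) w y)" for u v w y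
  proof -
    have "B(6 := y, 5 := w, 4 := v', 3 := u) = B(6 := y, 5 := w, 3 := u, 4 := v')" for v'
      by (auto simp: fun_eq_iff)
    then show ?thesis unfolding D_def by (simp only:) (rule det_expand_row)
  qed
  have expand_5: "D u v w y = (\<Sum>x\<in>UNIV. w $ x * D u v (e7 x) y)" for u v w y
  proof -
    have "B(6 := y, 5 := w', 4 := v, 3 := u) = B(6 := y, 4 := v, 3 := u, 5 := w')" for w'
      by (auto simp: fun_eq_iff)
    then show ?thesis unfolding D_def by (simp only:) (rule det_expand_row)
  qed
  have expand_6: "D u v w y = (\<Sum>x\<in>UNIV. y $ x * D u v w (e7 x))" for u v w y
  proof -
    have "B(6 := y', 5 := w, 4 := v, 3 := u) = B(5 := w, 4 := v, 3 := u, 6 := y')" for y'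
      by (auto simp: fun_eq_iff)
    then show ?thesis unfolding D_def by (simp only:) (rule det_expand_row)
  qed
  have "D (transpose R $ a) (transpose R $ b) (transpose R $ c) (transpose R $ d) =
      (\<Sum>a'\<in>UNIV. \<Sum>b'\<in>UNIV. \<Sum>c'\<in>UNIV. \<Sum>d'\<in>UNIV.
        R$a'$a * R$b'$b * R$c'$c * R$d'$d * D (e7 a') (e7 b') (e7 c') (e7 d'))"
    by (simp add: expand_3[of "transpose R $ a"] expand_4[of "e7 _" "transpose R $ b"]
        expand_5[of "e7 _" "e7 _" "transpose R $ c"]
        expand_6[of "e7 _" "e7 _" "e7 _" "transpose R $ d"]
        transpose_component sum_distrib_left mult.assoc)
  then show ?thesis by (simp add: levi D_def B_def)
qed

text \<open>Both sides are determinants of matrices \<open>M\<^sub>1\<close>, \<open>M\<^sub>2\<close> (rows \<open>R\<^sub>p, R\<^sub>q, R\<^sub>r, e\<^sub>a, \<dots>, e\<^sub>d\<close>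
  resp. \<open>e\<^sub>p, e\<^sub>q, e\<^sub>r\<close> and columns \<open>a, \<dots>, d\<close> of \<open>R\<close>) with \<open>M\<^sub>2 R = M\<^sub>1\<close>, and \<open>det R\<^sup>2 = 1\<close>.\<close>

lemma levi7_orthogonal_contraction:
  fixes R :: "real^7^7"
  assumes O: "orthogonal_matrix R"
  shows "det R * (\<Sum>i\<in>UNIV. \<Sum>j\<in>UNIV. \<Sum>k\<in>UNIV. R$p$i * R$q$j * R$r$k * levi7 (idx7 i j k a b c d))
    = (\<Sum>a'\<in>UNIV. \<Sum>b'\<in>UNIV. \<Sum>c'\<in>UNIV. \<Sum>d'\<in>UNIV.
        R$a'$a * R$b'$b * R$c'$c * R$d'$d * levi7 (idx7 p q r a' b' c' d'))"
proof -
  define M1 where "M1 = (\<chi> s. ((\<lambda>s. e7 (idx7 0 0 0 a b c d s))(2 := R$r, 1 := R$q, 0 := R$p)) s)"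
  define M2 where "M2 = (\<chi> s. ((\<lambda>s. e7 (idx7 p q r 0 0 0 0 s))
    (6 := transpose R $ d, 5 := transpose R $ c, 4 := transpose R $ b, 3 := transpose R $ a)) s)"
  have "(M2 ** R) $ s $ t = M1 $ s $ t" for s t
    using exhaust_7[of s]
    by (auto simp: M1_def M2_def matrix_matrix_mult_def idx7_def e7_def axis_def transpose_def
        sum_kronecker orthogonal_matrix_sum_cols[OF O])
  then have prod: "M2 ** R = M1" by (simp add: vec_eq_iff)
  have "det R * det R = 1"
    using det_orthogonal_matrix[OF O] by auto
  then have "det R * det M1 = det M2"
    by (simp add: prod[symmetric] det_mul algebra_simps)
  then show ?thesis by (simp add: sum_levi7_front sum_levi7_back M1_def M2_def)
qed

lemma hodge3_pull3:
  assumes O: "orthogonal_matrix R"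
  shows "hodge3 (det R) (pull3 R g) = pull4 R (hodge3 1 g)"
proof (intro ext)
  fix a b c d
  have "hodge3 (det R) (pull3 R g) a b c d = 1/6 * (\<Sum>p\<in>UNIV. \<Sum>q\<in>UNIV. \<Sum>r\<in>UNIV. g p q r *
      (det R * (\<Sum>i\<in>UNIV. \<Sum>j\<in>UNIV. \<Sum>k\<in>UNIV. R$p$i * R$q$j * R$r$k * levi7 (idx7 i j k a b c d))))"
    apply (simp add: hodge3_def pull3_def sum_distrib_left sum_distrib_right mult_ac)
    apply (rule trans[OF sum_rotate6], rule trans[OF sum_rotate6], rule trans[OF sum_rotate6])
    by (simp add: mult_ac)
  also have "\<dots> = 1/6 * (\<Sum>p\<in>UNIV. \<Sum>q\<in>UNIV. \<Sum>r\<in>UNIV. g p q r *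
      (\<Sum>a'\<in>UNIV. \<Sum>b'\<in>UNIV. \<Sum>c'\<in>UNIV. \<Sum>d'\<in>UNIV.
        R$a'$a * R$b'$b * R$c'$c * R$d'$d * levi7 (idx7 p q r a' b' c' d')))"
    by (simp only: levi7_orthogonal_contraction[OF O])
  also have "\<dots> = pull4 R (hodge3 1 g) a b c d"
    apply (simp add: hodge3_def pull4_def sum_distrib_left sum_distrib_right mult_ac)
    apply (rule trans[OF sum_rotate7], rule trans[OF sum_rotate7], rule trans[OF sum_rotate7],
        rule trans[OF sum_rotate7])
    by (simp add: mult_ac)
  finally show "hodge3 (det R) (pull3 R g) a b c d = pull4 R (hodge3 1 g) a b c d" .
qed

lemma cliff_pull3_zeta:
  assumes "orthogonal_matrix R"
  shows "cliff (pull3 R g) V zeta = spinor_map (transpose R) (cliff g (R *v V) zeta)"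
  by (simp add: cliff_pull3[OF assms] spinor_map_zeta)

lemma act2_contr3_pull3_zeta:
  assumes "orthogonal_matrix R"
  shows "act2 (pull3 R g) (contr3 X (pull3 R w)) zeta =
    spinor_map (transpose R) (act2 g (contr3 (R *v X) w) zeta)"
  by (simp add: act2_pull3[OF assms] contr3_pull3[OF assms] spinor_map_zeta)

lemma act3_contr4_pull4_zeta:
  assumes "orthogonal_matrix R"
  shows "act3 (pull3 R g) (contr4 X (pull4 R w)) zeta =
    spinor_map (transpose R) (act3 g (contr4 (R *v X) w) zeta)"
  by (simp add: act3_pull3[OF assms] contr4_pull4[OF assms] spinor_map_zeta)

theorem lemma5p4:
  fixes R :: "real^7^7" and X :: "real^7" and h :: "7 \<Rightarrow> 7 \<Rightarrow> real"
  assumes "orthogonal_matrix R"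
  shows "act2 (pull3 R phi0) (contr3 X (pull3 R phi0)) zeta
           = 3 *\<^sub>R cliff (pull3 R phi0) X zeta
    \<and> ((\<forall>i j. h i j = h j i) \<and> (\<Sum>i\<in>UNIV. h i i) = 0 \<longrightarrow>
           act2 (pull3 R phi0) (contr3 X (gamma_of (pull3 R phi0) h)) zeta
             = 2 *\<^sub>R cliff (pull3 R phi0) (apply_h h X) zeta
         \<and> act3 (pull3 R phi0) (contr4 X (hodge3 (det R) (gamma_of (pull3 R phi0) h))) zeta
             = - 2 *\<^sub>R cliff (pull3 R phi0) (apply_h h X) zeta)"
proof -
  note spinor_map_linear = linear_scale[OF linear_spinor_map] linear_neg[OF linear_spinor_map]
  have "act2 (pull3 R phi0) (contr3 X (pull3 R phi0)) zeta = 3 *\<^sub>R cliff (pull3 R phi0) X zeta"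
    by (simp add: act2_contr3_pull3_zeta[OF assms] act2_contr3_phi0 cliff_pull3_zeta[OF assms]
        spinor_map_linear)
  moreover have
    "act2 (pull3 R phi0) (contr3 X (gamma_of (pull3 R phi0) h)) zeta
       = 2 *\<^sub>R cliff (pull3 R phi0) (apply_h h X) zeta
     \<and> act3 (pull3 R phi0) (contr4 X (hodge3 (det R) (gamma_of (pull3 R phi0) h))) zeta
       = - 2 *\<^sub>R cliff (pull3 R phi0) (apply_h h X) zeta"
    if sym: "\<forall>i j. h i j = h j i" and traceless: "(\<Sum>i\<in>UNIV. h i i) = 0"
  proof -
    define h' where "h' = pull2 (transpose R) h"
    have sym': "\<And>i j. h' i j = h' j i"
      unfolding h'_def using sym by (intro pull2_symmetric) blast
    have traceless': "(\<Sum>i\<in>UNIV. h' i i) = 0"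
      unfolding h'_def using traceless by (simp add: pull2_transpose_trace[OF assms])
    have gamma: "gamma_of (pull3 R phi0) h = pull3 R (gamma_of phi0 h')"
      unfolding h'_def by (rule gamma_of_pull3[OF assms])
    have cliff: "cliff (pull3 R phi0) (apply_h h X) zeta =
        spinor_map (transpose R) (cliff phi0 (apply_h h' (R *v X)) zeta)"
      by (simp add: cliff_pull3_zeta[OF assms] apply_h_pull2[OF assms] h'_def)
    show ?thesis
      by (simp add: gamma cliff hodge3_pull3[OF assms] act2_contr3_pull3_zeta[OF assms]
          act3_contr4_pull4_zeta[OF assms] act2_contr3_gamma_of_phi0[of h', OF sym' traceless']
          act3_contr4_hodge3_gamma_of_phi0[of h', OF sym' traceless'] spinor_map_linear)
  qed
  ultimately show ?thesis by blast
qed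

end
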